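(* Let $\boldsymbol{\mu}$ and $\boldsymbol{\mu}^*$ be anchor partitions of $\{1,\dots,n\}$, and let $\boldsymbol{\omega}=(\omega_1,\dots,\omega_n)$ be a shrinkage vector. Suppose that for every $i$ and $j$ with $\omega_i>0$ and $\omega_j>0$, we have $\mu_i=\mu_j$ if and only if $\mu^*_i=\mu^*_j$. If $\boldsymbol{\pi}_1\sim SP(\boldsymbol{\mu},\boldsymbol{\omega},\boldsymbol{\sigma},\psi,p_\text{b})$ and $\boldsymbol{\pi}_2\sim SP(\boldsymbol{\mu}^*,\boldsymbol{\omega},\boldsymbol{\sigma},\psi,p_\text{b})$, then $\boldsymbol{\pi}_1$ and $\boldsymbol{\pi}_2$ are equal in distribution.
   Context: Partitions of $\{1,\dots,n\}$ are encoded as vectors of cluster labels $\boldsymbol{\pi}=(\pi_1,\dots,\pi_n)$ in canonical form: item 1 gets label 1, and each subsequent item that is not clustered with an earlier item gets the next unused integer. Two items share a label iff they are in the same cluster. Shrinkage partition (SP) distribution. The ingredients are: - an anchor partition $\boldsymbol{\mu}=(\mu_1,\dots,\mu_n)$; - a shrinkage vector $\boldsymbol{\omega}=(\omega_1,\dots,\omega_n)$ with $\omega_i\ge0$; - a permutation $\boldsymbol{\sigma}$ of $\{1,\dots,n\}$, giving the allocation order (the $k$-th item allocated is $\sigma_k$); - a grit parameter $\psi\in\mathbb{R}$; - a baseline partition distribution $p_\text{b}$ given by a conditional allocation probability function $\Pr_\text{b}(\pi_{\sigma_k}=c\mid\pi_{\sigma_1},\dots,\pi_{\sigma_{k-1}})$,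 so that $p_\text{b}(\boldsymbol{\pi})=\prod_k\Pr_\text{b}(\pi_{\sigma_k}\mid\cdot)$. At step $k\ge2$, the admissible values of $c$ are the existing labels $\{\pi_{\sigma_1},\dots,\pi_{\sigma_{k-1}}\}$ and the new label $|\{\pi_{\sigma_1},\dots,\pi_{\sigma_{k-1}}\}|+1$. The anchor factor is $$\Pr_\text{a}(\pi_{\sigma_k}=c\mid\cdot)\propto\exp\!\Big(\frac{\omega_{\sigma_k}}{(k-1)^2}\Big[\Big(\sum_{j=1}^{k-1}\omega_{\sigma_j}I\{\pi_{\sigma_j}=c\}I\{\mu_{\sigma_j}=\mu_{\sigma_k}\}\Big)^2-\psi\Big(\sum_{j=1}^{k-1}\omega_{\sigma_j}I\{\pi_{\sigma_j}=c\}\Big)^2\Big]\Big).$$ The SP allocation probability is $\Pr_\text{sp}(\pi_{\sigma_k}=c\mid\cdot)\propto\Pr_\text{b}(\pi_{\sigma_k}=c\mid\cdot)\Pr_\text{a}(\pi_{\sigma_k}=c\mid\cdot)$, normalized over the admissible $c$. The first item gets label 1. The pmf is $p_\text{sp}(\boldsymbol{\pi}\mid\boldsymbol{\mu},\boldsymbol{\omega},\boldsymbol{\sigma},\psi,p_\text{b})=\prod_{k=2}^n\Pr_\text{sp}(\pi_{\sigma_k}\mid\cdot)$, and this distribution is denoted $SP(\boldsymbol{\mu},\boldsymbol{\omega},\boldsymbol{\sigma},\psi,p_\text{b})$. *)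

theory Defs
  imports Complex_Main
begin

text \<open>Items are 1..n. A label vector is a function nat => nat (only values on 1..n matter).
  Canonical form: item i gets an earlier label or the next unused integer.\<close>
definition is_partition :: "nat \<Rightarrow> (nat \<Rightarrow> nat) \<Rightarrow> bool" where
  "is_partition n p \<longleftrightarrow>
     (\<forall>i\<in>{1..n}. p i \<in> p ` {1..<i} \<union> {card (p ` {1..<i}) + 1})"

definition admissible :: "nat list \<Rightarrow> nat set" where
  "admissible xs = set xs \<union> {card (set xs) + 1}"

definition canon_list :: "nat list \<Rightarrow> bool" where
  "canon_list xs \<longleftrightarrow> (\<forall>i<length xs. xs ! i \<in> admissible (take i xs))"

text \<open>Canonical label, in allocation order sigma, of the k-th allocated item under partition p:
  the number of distinct clusters seen up to the first allocated item of its cluster.\<close>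
definition alloc_lab :: "(nat \<Rightarrow> nat) \<Rightarrow> (nat \<Rightarrow> nat) \<Rightarrow> nat \<Rightarrow> nat" where
  "alloc_lab \<sigma> p k = card ((p \<circ> \<sigma>) ` {1..(LEAST j. 1 \<le> j \<and> p (\<sigma> j) = p (\<sigma> k))})"

text \<open>Anchor factor (unnormalised): z j is the label of the j-th allocated item.\<close>
definition anchor_w :: "(nat \<Rightarrow> nat) \<Rightarrow> (nat \<Rightarrow> real) \<Rightarrow> (nat \<Rightarrow> nat) \<Rightarrow> real
    \<Rightarrow> (nat \<Rightarrow> nat) \<Rightarrow> nat \<Rightarrow> nat \<Rightarrow> real" where
  "anchor_w \<mu> \<omega> \<sigma> \<psi> z k c =
     exp (\<omega> (\<sigma> k) / (real (k - 1))^2 *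
       ((\<Sum>j=1..k-1. \<omega> (\<sigma> j) * (if z j = c \<and> \<mu> (\<sigma> j) = \<mu> (\<sigma> k) then 1 else 0))^2
        - \<psi> * (\<Sum>j=1..k-1. \<omega> (\<sigma> j) * (if z j = c then 1 else 0))^2))"

text \<open>SP allocation probability at step k. The baseline pb takes the list of previous
  labels [z 1, ..., z (k-1)] and the candidate label c.\<close>
definition sp_cond :: "(nat \<Rightarrow> nat) \<Rightarrow> (nat \<Rightarrow> real) \<Rightarrow> (nat \<Rightarrow> nat) \<Rightarrow> real
    \<Rightarrow> (nat list \<Rightarrow> nat \<Rightarrow> real) \<Rightarrow> (nat \<Rightarrow> nat) \<Rightarrow> nat \<Rightarrow> nat \<Rightarrow> real" where
  "sp_cond \<mu> \<omega> \<sigma> \<psi> pb z k c =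
     (let prev = map z [1..<k] in
        pb prev c * anchor_w \<mu> \<omega> \<sigma> \<psi> z k c /
        (\<Sum>c'\<in>admissible prev. pb prev c' * anchor_w \<mu> \<omega> \<sigma> \<psi> z k c'))"

definition sp_pmf :: "nat \<Rightarrow> (nat \<Rightarrow> nat) \<Rightarrow> (nat \<Rightarrow> real) \<Rightarrow> (nat \<Rightarrow> nat) \<Rightarrow> real
    \<Rightarrow> (nat list \<Rightarrow> nat \<Rightarrow> real) \<Rightarrow> (nat \<Rightarrow> nat) \<Rightarrow> real" where
  "sp_pmf n \<mu> \<omega> \<sigma> \<psi> pb p =
     (\<Prod>k=2..n. sp_cond \<mu> \<omega> \<sigma> \<psi> pb (alloc_lab \<sigma> p) k (alloc_lab \<sigma> p k))"

end

theory Submission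
  imports Defs
begin

text \<open>The anchor partition enters the anchor factor at step k only through the indicators
  \<open>\<mu> (\<sigma> j) = \<mu> (\<sigma> k)\<close>, and each of them is weighted by \<open>\<omega> (\<sigma> j)\<close> while the whole exponent is
  weighted by \<open>\<omega> (\<sigma> k)\<close>. So only comparisons between items of positive shrinkage matter, and on
  those \<open>\<mu>\<close> and \<open>\<mu>'\<close> agree. Every allocation probability.\<close>

lemma anchor_w_cong:
  assumes "\<omega> (\<sigma> k) \<noteq> 0 \<Longrightarrow> \<forall>j\<in>{1..k-1}. \<omega> (\<sigma> j) \<noteq> 0 \<longrightarrow>
             (\<mu> (\<sigma> j) = \<mu> (\<sigma> k) \<longleftrightarrow> \<mu>' (\<sigma> j) = \<mu>' (\<sigma> k))"
  shows "anchor_w \<mu> \<omega> \<sigma> \<psi> z k c = anchor_w \<mu>' \<omega> \<sigma> \<psi> z k c"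
proof (cases "\<omega> (\<sigma> k) = 0")
  case True
  then show ?thesis by (simp add: anchor_w_def)
next
  case False
  have "(\<Sum>j=1..k-1. \<omega> (\<sigma> j) * (if z j = c \<and> \<mu> (\<sigma> j) = \<mu> (\<sigma> k) then 1 else 0))
      = (\<Sum>j=1..k-1. \<omega> (\<sigma> j) * (if z j = c \<and> \<mu>' (\<sigma> j) = \<mu>' (\<sigma> k) then 1 else 0))"
    using assms[OF False] by (intro sum.cong) auto
  then show ?thesis by (simp add: anchor_w_def)
qed

lemma sp_cond_anchor_cong:
  assumes "\<And>c. anchor_w \<mu> \<omega> \<sigma> \<psi> z k c = anchor_w \<mu>' \<omega> \<sigma> \<psi> z k c"
  shows "sp_cond \<mu> \<omega> \<sigma> \<psi> pb z k c = sp_cond \<mu>' \<omega> \<sigma> \<psi> pb z k c"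
  by (simp add: sp_cond_def assms)

lemma sp_pmf_anchor_cong:
  assumes "\<And>k z c. k \<in> {2..n} \<Longrightarrow> anchor_w \<mu> \<omega> \<sigma> \<psi> z k c = anchor_w \<mu>' \<omega> \<sigma> \<psi> z k c"
  shows "sp_pmf n \<mu> \<omega> \<sigma> \<psi> pb p = sp_pmf n \<mu>' \<omega> \<sigma> \<psi> pb p"
  unfolding sp_pmf_def using assms by (intro prod.cong refl sp_cond_anchor_cong)

theorem theorem4:
  fixes n :: nat and \<mu> \<mu>' :: "nat \<Rightarrow> nat" and \<omega> :: "nat \<Rightarrow> real"
    and \<sigma> :: "nat \<Rightarrow> nat" and \<psi> :: real and pb :: "nat list \<Rightarrow> nat \<Rightarrow> real"
  assumes mu: "is_partition n \<mu>" and mu': "is_partition n \<mu>'"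
    and omega: "\<forall>i\<in>{1..n}. \<omega> i \<ge> 0"
    and sigma: "bij_betw \<sigma> {1..n} {1..n}"
    and pb: "\<forall>xs. canon_list xs \<and> 1 \<le> length xs \<and> length xs < n \<longrightarrow>
               (\<forall>c\<in>admissible xs. pb xs c \<ge> 0) \<and> (\<Sum>c\<in>admissible xs. pb xs c) = 1"
    and same: "\<forall>i\<in>{1..n}. \<forall>j\<in>{1..n}. \<omega> i > 0 \<and> \<omega> j > 0 \<longrightarrow>
               (\<mu> i = \<mu> j \<longleftrightarrow> \<mu>' i = \<mu>' j)"
  shows "\<forall>p. is_partition n p \<longrightarrow>
           sp_pmf n \<mu> \<omega> \<sigma> \<psi> pb p = sp_pmf n \<mu>' \<omega> \<sigma> \<psi> pb p"
proof -
  have positive: "\<omega> (\<sigma> i) > 0" if "i \<in> {1..n}" "\<omega> (\<sigma> i) \<noteq> 0" for i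
    using that omega bij_betw_apply[OF sigma] by force
  have "anchor_w \<mu> \<omega> \<sigma> \<psi> z k c = anchor_w \<mu>' \<omega> \<sigma> \<psi> z k c" if k: "k \<in> {2..n}" for k z c
  proof (rule anchor_w_cong, intro ballI impI)
    fix j assume "\<omega> (\<sigma> k) \<noteq> 0" "j \<in> {1..k-1}" "\<omega> (\<sigma> j) \<noteq> 0"
    moreover have "k \<in> {1..n}" "j \<in> {1..n}" using k \<open>j \<in> {1..k-1}\<close> by auto
    ultimately show "\<mu> (\<sigma> j) = \<mu> (\<sigma> k) \<longleftrightarrow> \<mu>' (\<sigma> j) = \<mu>' (\<sigma> k)"
      using same positive bij_betw_apply[OF sigma] by blast
  qed
  then show ?thesis by (intro allI impI sp_pmf_anchor_cong)
qed

end
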